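(* Let $F=\mathbb{Q}$ or $F=\mathbb{Q}(\sqrt{-d})$ for some square-free positive integer $d$, regarded as a subfield of $\mathbb{C}$, with ring of integers $\mathcal{O}_F$. Let $\mathfrak{p}$ be a nonzero prime ideal of $\mathcal{O}_F$, let $\pi\in F$ with $v_\mathfrak{p}(\pi)=1$, and let $b\in\mathcal{O}_F$ be not a square modulo $\mathfrak{p}$, so that $Q=(\pi,b)_F$ is a division algebra. Fix a complex square root $\sqrt{\pi}$ of $\pi$ (so $K=F(\sqrt{\pi})$ is a maximal commutative subfield of $Q$) and consider the codebook $$\mathcal{C}(Q)=\left\{\begin{bmatrix}\alpha+\beta\sqrt{\pi} & \gamma+\delta\sqrt{\pi}\\ b(\gamma-\delta\sqrt{\pi}) & \alpha-\beta\sqrt{\pi}\end{bmatrix}\;\middle|\;\alpha,\beta,\gamma,\delta\in\mathcal{O}_F\right\}\subset M_2(\mathbb{C}).$$ Then $\mathcal{C}(Q)$ satisfies the non-vanishing determinant criterion, i.e. $\inf_{0\neq X\in\mathcal{C}(Q)}|\det X|^2>0$.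
   Context: $v_\mathfrak{p}$ is the $\mathfrak{p}$-adic valuation on $F$. For $a,b\in F^\times$, $(a,b)_F$ is the $F$-algebra with basis $1,\mathbf i,\mathbf j,\mathbf k$ and relations $\mathbf i^2=a$, $\mathbf j^2=b$, $\mathbf i\mathbf j=-\mathbf j\mathbf i=\mathbf k$. The non-vanishing determinant (NVD) criterion for an infinite codebook $\mathcal{C}$ of square complex matrices means that the minimum determinant $\inf_{0\neq X\in\mathcal{C}}|\det X|^2$ is strictly positive. *)

theory Defs
  imports "HOL-Analysis.Analysis" "HOL-Computational_Algebra.Computational_Algebra"
begin

definition ring_of_integers :: "complex set \<Rightarrow> complex set" where
  "ring_of_integers F = {x \<in> F. algebraic_int x}"

definition is_nonzero_prime_ideal :: "complex set \<Rightarrow> complex set \<Rightarrow> bool" where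
  "is_nonzero_prime_ideal R P \<longleftrightarrow>
     P \<subseteq> R \<and> 0 \<in> P \<and> P \<noteq> {0} \<and> P \<noteq> R \<and>
     (\<forall>x\<in>P. \<forall>y\<in>P. x + y \<in> P) \<and>
     (\<forall>r\<in>R. \<forall>x\<in>P. r * x \<in> P) \<and>
     (\<forall>x\<in>R. \<forall>y\<in>R. x * y \<in> P \<longrightarrow> x \<in> P \<or> y \<in> P)"

definition ideal_mult_set :: "complex set \<Rightarrow> complex set \<Rightarrow> complex set" where
  "ideal_mult_set I J = {(\<Sum>i<k. a i * c i) | (k::nat) a c. \<forall>i<k. a i \<in> I \<and> c i \<in> J}"

fun ideal_power_set :: "complex set \<Rightarrow> complex set \<Rightarrow> nat \<Rightarrow> complex set" where
  "ideal_power_set R P 0 = R"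
| "ideal_power_set R P (Suc n) = ideal_mult_set (ideal_power_set R P n) P"

definition ord_eq :: "complex set \<Rightarrow> complex set \<Rightarrow> complex \<Rightarrow> nat \<Rightarrow> bool" where
  "ord_eq R P x n \<longleftrightarrow> x \<in> ideal_power_set R P n \<and> x \<notin> ideal_power_set R P (Suc n)"

definition pval_eq :: "complex set \<Rightarrow> complex set \<Rightarrow> complex \<Rightarrow> int \<Rightarrow> bool" where
  "pval_eq R P z k \<longleftrightarrow>
     (\<exists>x y m n. x \<in> R \<and> y \<in> R \<and> x \<noteq> 0 \<and> y \<noteq> 0 \<and> z = x / y \<and>
        ord_eq R P x m \<and> ord_eq R P y n \<and> int m - int n = k)"

text \<open>The codebook C(Q) for Q = (pi, b)_F, with s a fixed complex square root of pi.\<close>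
definition codebook :: "complex set \<Rightarrow> complex \<Rightarrow> complex \<Rightarrow> (complex^2^2) set" where
  "codebook R s b =
     {vector [vector [\<alpha> + \<beta> * s, \<gamma> + \<delta> * s],
              vector [b * (\<gamma> - \<delta> * s), \<alpha> - \<beta> * s]] | \<alpha> \<beta> \<gamma> \<delta>.
        \<alpha> \<in> R \<and> \<beta> \<in> R \<and> \<gamma> \<in> R \<and> \<delta> \<in> R}"

end

theory Submission
  imports Defs
begin

text \<open>Write \<open>\<pi> = x / y\<close> with \<open>x, y \<in> \<O>\<^sub>F\<close>. For a codeword \<open>X\<close> with coordinates
  \<open>\<alpha>, \<beta>, \<gamma>, \<delta>\<close>, the number \<open>y det X = y (\<alpha>\<^sup>2 - b \<gamma>\<^sup>2) - x (\<beta>\<^sup>2 - b \<delta>\<^sup>2)\<close> lies in \<open>\<O>\<^sub>F\<close>,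
  and for nonzero \<open>z \<in> \<O>\<^sub>F\<close> the norm \<open>|z|\<^sup>2 = z cnj z\<close> is a positive integer; so
  \<open>|det X|\<^sup>2 \<ge> 1 / |y|\<^sup>2\<close> unless \<open>det X = 0\<close>. Since \<open>b\<close> is not a square modulo \<open>P\<close>,
  the valuation of \<open>u\<^sup>2 - b v\<^sup>2\<close> is even, while \<open>v\<^sub>P(x) = v\<^sub>P(y) + 1\<close>; a descent then puts \<open>\<alpha>, \<beta>, \<gamma>, \<delta>\<close> into every power of
  \<open>P\<close>, so they vanish.

  The valuation theory is done by hand: \<open>P cnj P\<close> is generated by the rational integer
  \<open>N = N(P)\<close>, so \<open>u \<in> P\<^sup>t\<^sup>+\<^sup>1\<close> iff \<open>u cnj e / N\<^sup>t \<in> P\<close> for all \<open>e \<in> P\<^sup>t\<close>. Elements of \<open>\<O>\<^sub>F\<close> are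
  recognised by integral trace and norm, using Gauss's lemma.\<close>

section \<open>Algebraic integers of degree at most two\<close>

lemma algebraic_int_of_trace_norm:
  fixes z :: complex
  assumes "z + cnj z \<in> \<int>" "z * cnj z \<in> \<int>"
  shows "algebraic_int z"
proof
  show "lead_coeff [:z * cnj z, -(z + cnj z), 1:] = 1" by simp
  show "\<forall>i. coeff [:z * cnj z, -(z + cnj z), 1:] i \<in> \<int>"
    using assms Ints_minus[OF assms(1)] by (auto simp: coeff_pCons split: nat.splits)
  show "poly [:z * cnj z, -(z + cnj z), 1:] z = 0"
    by (simp add: algebra_simps power2_eq_square)
qed

lemma Ints_if_Rats_square_Ints:
  fixes y :: complex
  assumes "y \<in> \<rat>" "y ^ 2 \<in> \<int>"
  shows "y \<in> \<int>"
proof -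
  have "algebraic_int y"
    by (rule algebraic_int_root[where p = "monom 1 2"])
       (use assms in \<open>auto simp: poly_monom coeff_monom int_imp_algebraic_int degree_monom_eq\<close>)
  thus ?thesis using assms(1) by (rule rational_algebraic_int_is_int)
qed

lemma map_poly_of_int_mult:
  "map_poly (of_int :: int \<Rightarrow> complex) (p * q) = map_poly of_int p * map_poly of_int q"
  by (rule poly_eqI) (simp add: coeff_mult coeff_map_poly of_int_sum)

lemma Rats_poly_clear_denominators:
  fixes q :: "complex poly"
  assumes "\<And>i. coeff q i \<in> \<rat>"
  obtains s Q where "s > 0" "smult (of_int s) q = map_poly of_int Q"
proof -
  have "\<exists>d::int. d > 0 \<and> of_int d * coeff q i \<in> \<int>" for i
  proof -
    obtain a b where "b > 0" "coeff q i = of_int a / of_int b"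
      using assms[of i] by (auto elim: Rats_cases')
    thus ?thesis by (intro exI[of _ b]) auto
  qed
  then obtain d where d: "\<And>i. d i > 0" "\<And>i. of_int (d i) * coeff q i \<in> \<int>"
    by metis
  define s where "s = (\<Prod>i\<le>degree q. d i)"
  have "coeff (smult (of_int s) q) i \<in> \<int>" for i
  proof (cases "i \<le> degree q")
    case True
    have eq: "of_int s * coeff q i = of_int (\<Prod>j\<in>{..degree q} - {i}. d j) * (of_int (d i) * coeff q i)"
      unfolding s_def using True by (simp add: prod.remove[of _ i])
    show ?thesis unfolding coeff_smult eq by (rule Ints_mult[OF Ints_of_int d(2)])
  qed (simp add: coeff_eq_0)
  then obtain Q where "smult (of_int s) q = map_poly of_int Q" by (metis intpolyE)
  moreover have "s > 0" unfolding s_def using d(1) by (simp add: prod_pos)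
  ultimately show thesis by (rule that[rotated])
qed

lemma content_eq_lead_coeff_of_monic_factor:
  fixes p Q H :: "int poly"
  assumes QH: "smult c p = Q * H" and "c > 0" "lead_coeff p = 1" "lead_coeff Q > 0"
  shows "content Q = lead_coeff Q"
proof -
  have "content p = 1"
    using content_dvd_coeff[of p "degree p"] assms(3) by (metis is_unit_content_iff)
  hence "content (smult c p) = c" using \<open>c > 0\<close> by simp
  hence "content Q * content H = c" by (simp add: QH content_mult)
  hence "smult c p = smult c (primitive_part Q * primitive_part H)"
    by (metis QH content_times_primitive_part mult_smult_left mult_smult_right smult_smult)
  hence "p = primitive_part Q * primitive_part H"
    using \<open>c > 0\<close> by (metis less_irrefl smult_cancel)
  hence "lead_coeff (primitive_part Q) * lead_coeff (primitive_part H) = 1"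
    using assms(3) by (simp add: lead_coeff_mult)
  hence "lead_coeff (primitive_part Q) \<in> {1, -1}"
    using zmult_eq_1_iff by blast
  moreover have "lead_coeff Q = content Q * lead_coeff (primitive_part Q)"
    by (metis content_times_primitive_part lead_coeff_smult)
  moreover have "content Q \<ge> 0"
    by (metis abs_ge_zero normalize_content normalize_int_def)
  ultimately show ?thesis using assms(4) by (auto simp: mult_less_0_iff)
qed

lemma monic_Rats_factor_Ints:
  fixes q h :: "complex poly" and p :: "int poly"
  assumes p: "map_poly of_int p = q * h" "lead_coeff p = 1"
    and q: "lead_coeff q = 1" "\<And>i. coeff q i \<in> \<rat>" and h: "\<And>i. coeff h i \<in> \<rat>"
  shows "coeff q i \<in> \<int>"
proof -
  obtain s Q where s: "s > 0" "smult (of_int s) q = map_poly of_int Q"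
    using Rats_poly_clear_denominators q(2) by blast
  obtain s' H where s': "s' > 0" "smult (of_int s') h = map_poly of_int H"
    using Rats_poly_clear_denominators h by blast
  have "map_poly of_int (smult (s * s') p) = map_poly (of_int :: int \<Rightarrow> complex) (Q * H)"
    by (simp add: map_poly_smult map_poly_of_int_mult p(1) ac_simps flip: s(2) s'(2))
  hence QH: "smult (s * s') p = Q * H"
    by (metis (no_types, lifting) coeff_map_poly of_int_0 of_int_eq_iff poly_eqI)
  have "(of_int (lead_coeff Q) :: complex) = of_int s"
    using arg_cong[OF s(2), of lead_coeff] q(1) s(1) by (simp add: degree_map_poly coeff_map_poly)
  hence "lead_coeff Q = s" by simp
  hence "content Q = s"
    using content_eq_lead_coeff_of_monic_factor[OF QH] s s' p(2) by simp
  hence "smult (of_int s) q = smult (of_int s) (map_poly of_int (primitive_part Q))"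
    by (metis s(2) content_times_primitive_part map_poly_smult of_int_0 of_int_mult)
  hence "q = map_poly of_int (primitive_part Q)"
    using s(1) by (metis less_irrefl of_int_eq_0_iff smult_cancel)
  thus ?thesis by (simp add: coeff_map_poly)
qed

lemma Rats_coeffs_of_quadratic_cofactor:
  fixes h :: "complex poly"
  assumes "a \<in> \<rat>" "b \<in> \<rat>" "\<And>i. coeff ([:a, b, 1:] * h) i \<in> \<rat>"
  shows "coeff h i \<in> \<rat>"
proof -
  have "\<forall>i. degree h < i + j \<longrightarrow> coeff h i \<in> \<rat>" for j
  proof (induction j)
    case 0 thus ?case by (auto simp: coeff_eq_0)
  next
    case (Suc j)
    show ?case
    proof (intro allI impI)
      fix i assume "degree h < i + Suc j"
      hence "coeff h (Suc i) \<in> \<rat>" "coeff h (Suc (Suc i)) \<in> \<rat>" using Suc by auto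
      moreover have "coeff h i = coeff ([:a, b, 1:] * h) (Suc (Suc i))
          - a * coeff h (Suc (Suc i)) - b * coeff h (Suc i)"
        by (simp add: mult_pCons_left algebra_simps)
      ultimately show "coeff h i \<in> \<rat>" using assms by (metis Rats_diff Rats_mult)
    qed
  qed
  from this[of "Suc (degree h)"] show ?thesis by simp
qed

lemma trace_norm_Ints_if_algebraic_int:
  fixes z :: complex
  assumes z: "algebraic_int z" "Im z \<noteq> 0"
    and tn: "z + cnj z \<in> \<rat>" "z * cnj z \<in> \<rat>"
  shows "z + cnj z \<in> \<int>" "z * cnj z \<in> \<int>"
proof -
  obtain p where p: "poly (map_poly of_int p) z = 0" "lead_coeff p = 1"
    using z(1) by (auto simp: algebraic_int_altdef_ipoly)
  define P where "P = (map_poly of_int p :: complex poly)"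
  define q where "q = [:z * cnj z, -(z + cnj z), 1:]"
  have "map_poly cnj P = P"
    by (rule poly_eqI) (simp add: P_def coeff_map_poly)
  hence "poly P (cnj z) = 0"
    using poly_cnj[of P z] p(1) by (simp add: P_def)
  obtain g where g: "P = [:-z, 1:] * g"
    using p(1) by (metis P_def poly_eq_0_iff_dvd dvdE)
  have "cnj z \<noteq> z" using z(2) by (metis Reals_cnj_iff complex_is_Real_iff)
  hence "poly g (cnj z) = 0" using \<open>poly P (cnj z) = 0\<close> by (simp add: g)
  then obtain h where h: "g = [:-cnj z, 1:] * h" by (metis poly_eq_0_iff_dvd dvdE)
  have "[:-z, 1:] * [:-cnj z, 1:] = q" by (simp add: q_def algebra_simps)
  moreover have "P = ([:-z, 1:] * [:-cnj z, 1:]) * h" using g h by (simp only: mult.assoc)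
  ultimately have Pqh: "P = q * h" by simp
  have qQ: "coeff q i \<in> \<rat>" for i
    using tn Rats_minus_iff[THEN iffD2, OF tn(1)] by (auto simp: q_def coeff_pCons split: nat.splits)
  have "coeff (q * h) i \<in> \<rat>" for i
    by (simp flip: Pqh add: P_def coeff_map_poly)
  hence "coeff h i \<in> \<rat>" for i
    using Rats_coeffs_of_quadratic_cofactor[of "z * cnj z" "-(z + cnj z)" h] qQ[of 0] qQ[of 1]
    unfolding q_def by simp
  hence "coeff q i \<in> \<int>" for i
    using monic_Rats_factor_Ints[of p q h] Pqh p(2) qQ by (simp add: P_def q_def)
  from this[of 0] this[of 1] show "z * cnj z \<in> \<int>" "z + cnj z \<in> \<int>"
    by (auto simp: q_def minus_add_distrib[symmetric] simp del: minus_add_distrib)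
qed

text \<open>The polynomials below are \<open>\<Prod> (X - (x' + y'))\<close> and \<open>\<Prod> (X - x' y')\<close>, with \<open>x'\<close>, \<open>y'\<close>
  running over the roots of \<open>X\<^sup>2 - t\<^sub>1 X + n\<^sub>1\<close> and \<open>X\<^sup>2 - t\<^sub>2 X + n\<^sub>2\<close>.\<close>
lemma algebraic_int_add_of_trace_norm:
  fixes x y :: complex
  assumes "x + cnj x \<in> \<int>" "x * cnj x \<in> \<int>" "y + cnj y \<in> \<int>" "y * cnj y \<in> \<int>"
  shows "algebraic_int (x + y)"
proof -
  define t1 t2 n1 n2 where "t1 = x + cnj x" "t2 = y + cnj y" "n1 = x * cnj x" "n2 = y * cnj y"
  have hx: "x ^ 2 = t1 * x - n1" and hy: "y ^ 2 = t2 * y - n2"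
    by (simp_all add: t1_t2_n1_n2_def algebra_simps power2_eq_square)
  define T S K C where "T = t1 + t2" "S = n1 + n2" "K = t1 * t2"
    "C = n2 * (t1^2 - 2*n1) + n1 * (t2^2 - 2*n2)"
  define p where "p = [:S^2 + K*S + C, -2*T*S - K*T, T^2 + 2*S + K, -2*T, 1:]"
  have "T \<in> \<int>" "S \<in> \<int>" "K \<in> \<int>" "C \<in> \<int>"
    using assms unfolding T_S_K_C_def t1_t2_n1_n2_def by auto
  hence "\<forall>i. coeff p i \<in> \<int>" by (auto simp: p_def coeff_pCons split: nat.splits)
  moreover have "poly p (x + y) = 0"
  proof -
    have "S^2 + K*S + C + (x+y) * (-2*T*S - K*T + (x+y) * (T^2 + 2*S + K
        + (x+y) * (-2*T + (x+y)))) = 0"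
      unfolding T_S_K_C_def using hx hy by algebra
    thus ?thesis by (simp add: p_def)
  qed
  ultimately show ?thesis by (intro algebraic_int.intros[of p]) (simp_all add: p_def)
qed

lemma algebraic_int_mult_of_trace_norm:
  fixes x y :: complex
  assumes "x + cnj x \<in> \<int>" "x * cnj x \<in> \<int>" "y + cnj y \<in> \<int>" "y * cnj y \<in> \<int>"
  shows "algebraic_int (x * y)"
proof -
  define t1 t2 n1 n2 where "t1 = x + cnj x" "t2 = y + cnj y" "n1 = x * cnj x" "n2 = y * cnj y"
  have hx: "x ^ 2 = t1 * x - n1" and hy: "y ^ 2 = t2 * y - n2"
    by (simp_all add: t1_t2_n1_n2_def algebra_simps power2_eq_square)
  define N K C where "N = n1 * n2" "K = t1 * t2" "C = n2 * (t1^2 - 2*n1) + n1 * (t2^2 - 2*n2)"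
  define p where "p = [:N^2, -K*N, 2*N + C, -K, 1:]"
  have "N \<in> \<int>" "K \<in> \<int>" "C \<in> \<int>"
    using assms unfolding N_K_C_def t1_t2_n1_n2_def by auto
  hence "\<forall>i. coeff p i \<in> \<int>" by (auto simp: p_def coeff_pCons split: nat.splits)
  moreover have "poly p (x * y) = 0"
  proof -
    have "N^2 + (x*y) * (-K*N + (x*y) * (2*N + C + (x*y) * (-K + (x*y)))) = 0"
      unfolding N_K_C_def using hx hy by algebra
    thus ?thesis by (simp add: p_def)
  qed
  ultimately show ?thesis by (intro algebraic_int.intros[of p]) (simp_all add: p_def)
qed

section \<open>Products and powers of ideals\<close>

lemma zero_in_ideal_mult_set: "0 \<in> ideal_mult_set I J"
  unfolding ideal_mult_set_def by (rule CollectI, rule exI[of _ 0]) auto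

lemma mult_in_ideal_mult_set: "a \<in> I \<Longrightarrow> c \<in> J \<Longrightarrow> a * c \<in> ideal_mult_set I J"
  unfolding ideal_mult_set_def
  by (rule CollectI, rule exI[of _ 1], rule exI[of _ "\<lambda>_. a"], rule exI[of _ "\<lambda>_. c"]) auto

lemma add_in_ideal_mult_set:
  assumes "x \<in> ideal_mult_set I J" "y \<in> ideal_mult_set I J"
  shows "x + y \<in> ideal_mult_set I J"
proof -
  obtain k1 :: nat and a c where x: "x = (\<Sum>i<k1. a i * c i)" "\<forall>i<k1. a i \<in> I \<and> c i \<in> J"
    using assms(1) unfolding ideal_mult_set_def by blast
  obtain k2 :: nat and a' c' where y: "y = (\<Sum>i<k2. a' i * c' i)" "\<forall>i<k2. a' i \<in> I \<and> c' i \<in> J"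
    using assms(2) unfolding ideal_mult_set_def by blast
  define A where "A i = (if i < k1 then a i else a' (i - k1))" for i
  define C where "C i = (if i < k1 then c i else c' (i - k1))" for i
  have "(\<Sum>i<k1 + j. A i * C i) = x + (\<Sum>i<j. a' i * c' i)" for j
    by (induction j) (auto simp: A_def C_def x(1) intro!: sum.cong)
  hence "x + y = (\<Sum>i<k1 + k2. A i * C i)" by (simp add: y(1))
  moreover have "\<forall>i<k1 + k2. A i \<in> I \<and> C i \<in> J"
    using x(2) y(2) unfolding A_def C_def by auto
  ultimately show ?thesis unfolding ideal_mult_set_def by blast
qed

lemma ideal_mult_set_induct [consumes 1, case_names zero add mult]:
  assumes "x \<in> ideal_mult_set I J" and "Q 0" and "\<And>u v. Q u \<Longrightarrow> Q v \<Longrightarrow> Q (u + v)"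
    and "\<And>a c. a \<in> I \<Longrightarrow> c \<in> J \<Longrightarrow> Q (a * c)"
  shows "Q x"
proof -
  obtain k :: nat and a c where x: "x = (\<Sum>i<k. a i * c i)" "\<forall>i<k. a i \<in> I \<and> c i \<in> J"
    using assms(1) unfolding ideal_mult_set_def by blast
  have "j \<le> k \<Longrightarrow> Q (\<Sum>i<j. a i * c i)" for j
    by (induction j) (use assms(2-4) x(2) in auto)
  thus ?thesis using x(1) by simp
qed

lemma mult_in_ideal_mult_set_mult:
  assumes "x \<in> ideal_mult_set I J" "y \<in> ideal_mult_set I' J'"
    and "\<And>a a'. a \<in> I \<Longrightarrow> a' \<in> I' \<Longrightarrow> a * a' \<in> I2"
    and "\<And>c c'. c \<in> J \<Longrightarrow> c' \<in> J' \<Longrightarrow> c * c' \<in> J2"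
  shows "x * y \<in> ideal_mult_set I2 J2"
  using assms(1)
proof (induction rule: ideal_mult_set_induct)
  case (mult a c)
  from assms(2) show ?case
  proof (induction rule: ideal_mult_set_induct)
    case (mult a' c')
    have "(a * a') * (c * c') \<in> ideal_mult_set I2 J2"
      using assms(3,4) \<open>a \<in> I\<close> \<open>c \<in> J\<close> mult by (simp add: mult_in_ideal_mult_set)
    thus ?case by (simp add: ac_simps)
  qed (simp_all add: zero_in_ideal_mult_set add_in_ideal_mult_set distrib_left)
qed (simp_all add: zero_in_ideal_mult_set add_in_ideal_mult_set distrib_right)

locale subring_ideal =
  fixes R P :: "complex set"
  assumes one_in_R: "1 \<in> R"
    and R_add: "x \<in> R \<Longrightarrow> y \<in> R \<Longrightarrow> x + y \<in> R"
    and R_uminus: "x \<in> R \<Longrightarrow> - x \<in> R"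
    and R_mult: "x \<in> R \<Longrightarrow> y \<in> R \<Longrightarrow> x * y \<in> R"
    and P_subset: "P \<subseteq> R"
    and zero_in_P: "0 \<in> P"
    and P_add: "x \<in> P \<Longrightarrow> y \<in> P \<Longrightarrow> x + y \<in> P"
    and P_mult: "r \<in> R \<Longrightarrow> x \<in> P \<Longrightarrow> r * x \<in> P"
begin

abbreviation P_power :: "nat \<Rightarrow> complex set" where
  "P_power k \<equiv> ideal_power_set R P k"

lemma zero_in_R: "0 \<in> R"
  using zero_in_P P_subset by blast

lemma R_diff: "x \<in> R \<Longrightarrow> y \<in> R \<Longrightarrow> x - y \<in> R"
  using R_add[of x "- y"] R_uminus by simp

lemma R_power: "x \<in> R \<Longrightarrow> x ^ k \<in> R"
  by (induction k) (simp_all add: one_in_R R_mult)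

lemma P_uminus: "x \<in> P \<Longrightarrow> - x \<in> P"
  using P_mult[OF R_uminus[OF one_in_R]] by simp

lemma P_power_subset: "P_power k \<subseteq> R"
proof (induction k)
  case (Suc k)
  show ?case
  proof
    fix x assume "x \<in> P_power (Suc k)"
    hence "x \<in> ideal_mult_set (P_power k) P" by simp
    thus "x \<in> R"
    proof (induction rule: ideal_mult_set_induct)
      case (mult a c)
      thus ?case using Suc P_subset by (blast intro: R_mult)
    qed (simp_all add: zero_in_R R_add)
  qed
qed simp

lemma zero_in_P_power: "0 \<in> P_power k"
  by (cases k) (simp_all add: zero_in_R zero_in_ideal_mult_set)

lemma P_power_add: "x \<in> P_power k \<Longrightarrow> y \<in> P_power k \<Longrightarrow> x + y \<in> P_power k"
  by (cases k) (simp_all add: R_add add_in_ideal_mult_set)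

lemma P_power_mult: "r \<in> R \<Longrightarrow> x \<in> P_power k \<Longrightarrow> r * x \<in> P_power k"
proof (induction k arbitrary: x)
  case (Suc k)
  from Suc.prems(2) have "x \<in> ideal_mult_set (P_power k) P" by simp
  thus ?case
  proof (induction rule: ideal_mult_set_induct)
    case (mult a c)
    hence "(r * a) * c \<in> ideal_mult_set (P_power k) P"
      using Suc.IH[OF Suc.prems(1)] by (simp add: mult_in_ideal_mult_set)
    thus ?case by (simp add: mult.assoc)
  qed (simp_all add: distrib_left zero_in_ideal_mult_set add_in_ideal_mult_set)
qed (simp add: R_mult)

lemma P_power_diff: "x \<in> P_power k \<Longrightarrow> y \<in> P_power k \<Longrightarrow> x - y \<in> P_power k"
  using P_power_add[of x k "- y"] P_power_mult[OF R_uminus[OF one_in_R], of y k] by simp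

lemma P_power_Suc_subset: "P_power (Suc k) \<subseteq> P_power k"
proof
  fix x assume "x \<in> P_power (Suc k)"
  hence "x \<in> ideal_mult_set (P_power k) P" by simp
  thus "x \<in> P_power k"
  proof (induction rule: ideal_mult_set_induct)
    case (mult a c)
    thus ?case using P_subset P_power_mult[of c a k] by (auto simp: mult.commute)
  qed (simp_all add: zero_in_P_power P_power_add)
qed

lemma P_power_mult_P_power: "a \<in> P_power k \<Longrightarrow> c \<in> P_power l \<Longrightarrow> a * c \<in> P_power (k + l)"
proof (induction l arbitrary: c)
  case 0
  hence "c * a \<in> P_power k" by (simp add: P_power_mult)
  thus ?case by (simp add: mult.commute)
next
  case (Suc l)
  from Suc.prems(2) have "c \<in> ideal_mult_set (P_power l) P" by simp
  thus ?case
  proof (induction rule: ideal_mult_set_induct)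
    case (mult a' c')
    hence "(a * a') * c' \<in> ideal_mult_set (P_power (k + l)) P"
      using Suc.IH[OF Suc.prems(1)] by (simp add: mult_in_ideal_mult_set)
    thus ?case by (simp add: mult.assoc)
  qed (simp_all add: distrib_left zero_in_ideal_mult_set add_in_ideal_mult_set)
qed

end

section \<open>Fields whose ring of integers is detected by trace and norm\<close>

text \<open>The fields covered are \<open>\<rat>\<close> and the imaginary quadratic fields: complex conjugation is
  their only nontrivial automorphism, and the ring of integers lies in the lattice
  \<open>D\<^sup>-\<^sup>1 (\<int> + \<int> w)\<close>.\<close>
locale cnj_field =
  fixes F :: "complex set" and D :: int and w :: complex
  assumes F_add: "x \<in> F \<Longrightarrow> y \<in> F \<Longrightarrow> x + y \<in> F"
    and F_mult: "x \<in> F \<Longrightarrow> y \<in> F \<Longrightarrow> x * y \<in> F"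
    and F_uminus: "x \<in> F \<Longrightarrow> - x \<in> F"
    and F_cnj: "x \<in> F \<Longrightarrow> cnj x \<in> F"
    and Rats_in_F: "r \<in> \<rat> \<Longrightarrow> r \<in> F"
    and trace_Rats: "x \<in> F \<Longrightarrow> x + cnj x \<in> \<rat>"
    and norm_Rats: "x \<in> F \<Longrightarrow> x * cnj x \<in> \<rat>"
    and real_Rats: "x \<in> F \<Longrightarrow> Im x = 0 \<Longrightarrow> x \<in> \<rat>"
    and D_pos: "D > 0"
    and w_integral: "w \<in> F" "w + cnj w \<in> \<int>" "w * cnj w \<in> \<int>"
    and integers_lattice: "x \<in> F \<Longrightarrow> x + cnj x \<in> \<int> \<Longrightarrow> x * cnj x \<in> \<int> \<Longrightarrow>
      \<exists>a b. of_int D * x = of_int a + of_int b * w"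
begin

abbreviation R :: "complex set" where
  "R \<equiv> ring_of_integers F"

lemma ring_of_integers_iff: "x \<in> R \<longleftrightarrow> x \<in> F \<and> x + cnj x \<in> \<int> \<and> x * cnj x \<in> \<int>"
proof
  assume "x \<in> R"
  hence x: "x \<in> F" "algebraic_int x" by (auto simp: ring_of_integers_def)
  show "x \<in> F \<and> x + cnj x \<in> \<int> \<and> x * cnj x \<in> \<int>"
  proof (cases "Im x = 0")
    case True
    hence "cnj x = x" by (simp add: complex_eq_iff)
    moreover have "x \<in> \<int>" using rational_algebraic_int_is_int[OF x(2) real_Rats[OF x(1) True]] .
    ultimately show ?thesis using x(1) by auto
  next
    case False
    thus ?thesis using trace_norm_Ints_if_algebraic_int[OF x(2) False] x(1) trace_Rats norm_Rats
      by blast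
  qed
qed (auto simp: ring_of_integers_def intro: algebraic_int_of_trace_norm)

lemma trace_Ints: "x \<in> R \<Longrightarrow> x + cnj x \<in> \<int>"
  and norm_Ints: "x \<in> R \<Longrightarrow> x * cnj x \<in> \<int>"
  by (simp_all add: ring_of_integers_iff)

lemma norm_pos_int:
  assumes "x \<in> R" "x \<noteq> 0"
  obtains K :: int where "K > 0" "x * cnj x = of_int K"
proof -
  obtain K where K: "x * cnj x = of_int K" using norm_Ints[OF assms(1)] by (auto elim: Ints_cases)
  have "real_of_int K = (cmod x)\<^sup>2"
    using K complex_norm_square[of x] by (metis of_real_eq_iff of_real_of_int_eq of_real_power)
  hence "K > 0" using assms(2) by (metis of_int_0_less_iff zero_less_norm_iff zero_less_power)
  thus thesis using K that by blast
qed

lemma norm_ge_1: "x \<in> R \<Longrightarrow> x \<noteq> 0 \<Longrightarrow> (cmod x)\<^sup>2 \<ge> 1"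
  by (metis norm_pos_int complex_norm_square of_int_1_le_iff of_real_eq_iff of_real_of_int_eq
      of_real_power int_one_le_iff_zero_less)

lemma of_int_in_R: "of_int k \<in> R"
  unfolding ring_of_integers_def by (auto intro: Rats_in_F)

lemma cnj_in_R: "x \<in> R \<Longrightarrow> cnj x \<in> R"
  unfolding ring_of_integers_def by (simp add: F_cnj)

lemma w_in_R: "w \<in> R"
  using w_integral by (simp add: ring_of_integers_iff)

end

section \<open>Valuation at a prime ideal\<close>

locale cnj_field_prime = cnj_field +
  fixes P :: "complex set"
  assumes P_prime_ideal: "is_nonzero_prime_ideal (ring_of_integers F) P"

sublocale cnj_field_prime \<subseteq> subring_ideal "ring_of_integers F" P
proof
  fix x y assume x: "x \<in> R" and y: "y \<in> R"
  have "x \<in> F" "y \<in> F" "x + cnj x \<in> \<int>" "x * cnj x \<in> \<int>" "y + cnj y \<in> \<int>" "y * cnj y \<in> \<int>"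
    using x y by (simp_all add: ring_of_integers_iff)
  thus "x + y \<in> R" "x * y \<in> R"
    using F_add F_mult algebraic_int_add_of_trace_norm algebraic_int_mult_of_trace_norm
    by (simp_all add: ring_of_integers_def)
qed (use P_prime_ideal of_int_in_R[of 1] in
      \<open>auto simp: is_nonzero_prime_ideal_def ring_of_integers_def F_uminus\<close>)

context cnj_field_prime
begin

lemma P_in_R: "x \<in> P \<Longrightarrow> x \<in> R"
  using P_subset by blast

lemma P_prime: "x \<in> R \<Longrightarrow> y \<in> R \<Longrightarrow> x * y \<in> P \<Longrightarrow> x \<in> P \<or> y \<in> P"
  using P_prime_ideal unfolding is_nonzero_prime_ideal_def by blast

lemma one_notin_P: "1 \<notin> P"
proof
  assume "1 \<in> P"
  hence "R \<subseteq> P" using P_mult[of _ 1] by auto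
  thus False using P_prime_ideal P_subset unfolding is_nonzero_prime_ideal_def by blast
qed

abbreviation P_cnj_P :: "complex set" where
  "P_cnj_P \<equiv> ideal_mult_set P (cnj ` P)"

text \<open>\<open>N\<close> is the norm of \<open>P\<close>: the ideal \<open>P \<cdot> cnj P\<close> is generated by \<open>N\<close>. This substitutes for
  invertibility of ideals: \<open>P\<^sup>t\<close> is recovered from its pairing with \<open>cnj P\<^sup>t\<close> divided by \<open>N\<^sup>t\<close>.\<close>
definition N :: nat where
  "N = (LEAST m. m > 0 \<and> (of_nat m :: complex) \<in> P_cnj_P)"

lemma of_int_mult_in_P_cnj_P: "x \<in> P_cnj_P \<Longrightarrow> of_int k * x \<in> P_cnj_P"
proof (induction rule: ideal_mult_set_induct)
  case (mult a c)
  hence "(of_int k * a) * c \<in> P_cnj_P" by (simp add: P_mult of_int_in_R mult_in_ideal_mult_set)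
  thus ?case by (simp add: mult.assoc)
qed (simp_all add: zero_in_ideal_mult_set add_in_ideal_mult_set distrib_left)

lemma norm_in_P_cnj_P: "a \<in> P \<Longrightarrow> a * cnj a \<in> P_cnj_P"
  by (simp add: mult_in_ideal_mult_set)

lemma N_pos: "N > 0" and N_in_P_cnj_P: "of_nat N \<in> P_cnj_P"
proof -
  obtain a where "a \<in> P" "a \<noteq> 0"
    using P_prime_ideal zero_in_P unfolding is_nonzero_prime_ideal_def by blast
  then obtain K where K: "K > 0" "a * cnj a = of_int K" using norm_pos_int P_in_R by metis
  hence "nat K > 0 \<and> (of_nat (nat K) :: complex) \<in> P_cnj_P"
    using norm_in_P_cnj_P[OF \<open>a \<in> P\<close>] by simp
  hence "N > 0 \<and> of_nat N \<in> P_cnj_P" unfolding N_def by (rule LeastI)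
  thus "N > 0" "of_nat N \<in> P_cnj_P" by simp_all
qed

lemma N_dvd:
  assumes "(of_int t :: complex) \<in> P_cnj_P"
  shows "int N dvd t"
proof -
  have "of_int t + of_int (- (t div int N)) * (of_nat N :: complex) \<in> P_cnj_P"
    by (intro add_in_ideal_mult_set assms of_int_mult_in_P_cnj_P N_in_P_cnj_P)
  moreover have "of_int (t mod int N) = of_int t + of_int (- (t div int N)) * (of_nat N :: complex)"
    by (simp flip: minus_div_mult_eq_mod)
  ultimately have mod_in: "of_int (t mod int N) \<in> P_cnj_P" by simp
  have "\<not> t mod int N > 0"
  proof
    assume pos: "t mod int N > 0"
    moreover have "nat (t mod int N) < N"
      by (metis N_pos nat_less_iff of_nat_0_less_iff pos_mod_bound pos_mod_sign)
    hence "\<not> (nat (t mod int N) > 0 \<and> (of_nat (nat (t mod int N)) :: complex) \<in> P_cnj_P)"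
      unfolding N_def by (rule not_less_Least)
    thus False using pos mod_in by simp
  qed
  moreover have "t mod int N \<ge> 0" using N_pos by simp
  ultimately show ?thesis by (simp add: dvd_eq_mod_eq_0)
qed

lemma N_in_P: "of_nat N \<in> P"
  using N_in_P_cnj_P
proof (induction rule: ideal_mult_set_induct)
  case (mult a c)
  then obtain e where "e \<in> P" "c = cnj e" by blast
  hence "c * a \<in> P" using mult(1) by (simp add: P_mult cnj_in_R P_in_R)
  thus ?case by (simp add: mult.commute)
qed (simp_all add: zero_in_P P_add)

lemma N_ge_2: "N \<ge> 2"
proof -
  have "N \<noteq> 1" using N_in_P one_notin_P by auto
  thus ?thesis using N_pos by linarith
qed

lemma P_times_cnj_P_div_N:
  assumes a: "a \<in> P" and c: "c \<in> P"
  shows "a * cnj c / of_nat N \<in> R"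
proof -
  define q where "q = a * cnj c / of_nat N"
  have "a \<in> F" "c \<in> F" using a c by (auto simp: ring_of_integers_def dest: P_in_R)
  hence "q \<in> F" unfolding q_def divide_inverse by (intro F_mult F_cnj) (auto intro: Rats_in_F)
  have "a * cnj c + cnj (a * cnj c) \<in> \<int>" by (intro trace_Ints R_mult cnj_in_R P_in_R a c)
  then obtain t where t: "a * cnj c + c * cnj a = of_int t"
    by (auto elim: Ints_cases simp: mult.commute)
  have "a * cnj c + c * cnj a \<in> P_cnj_P"
    using a c by (simp add: add_in_ideal_mult_set mult_in_ideal_mult_set)
  then obtain t' where t': "t = int N * t'" using N_dvd t by (metis dvdE)
  have "q + cnj q = (a * cnj c + c * cnj a) / of_nat N"
    by (simp add: q_def add_divide_distrib mult.commute)
  also have "\<dots> = of_int t'" using N_pos by (simp add: t t')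
  finally have "q + cnj q = of_int t'" .
  obtain u v where u: "a * cnj a = of_int u" and v: "c * cnj c = of_int v"
    using norm_Ints[OF P_in_R[OF a]] norm_Ints[OF P_in_R[OF c]] by (auto elim!: Ints_cases)
  obtain u' v' where u': "u = int N * u'" and v': "v = int N * v'"
    using N_dvd norm_in_P_cnj_P a c u v by (metis dvdE)
  have "q * cnj q = (a * cnj a) * (c * cnj c) / (of_nat N * of_nat N)" by (simp add: q_def)
  also have "\<dots> = of_int (u' * v')" using N_pos by (simp add: u v u' v')
  finally have "q * cnj q \<in> \<int>" by simp
  moreover have "q + cnj q \<in> \<int>" using \<open>q + cnj q = of_int t'\<close> by simp
  ultimately show ?thesis using \<open>q \<in> F\<close> unfolding q_def ring_of_integers_iff by auto
qed

lemma cnj_pairing_in_R: "u \<in> P_power t \<Longrightarrow> e \<in> P_power t \<Longrightarrow> u * cnj e / of_nat N ^ t \<in> R"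
proof (induction t arbitrary: u e)
  case 0 thus ?case by (simp add: R_mult cnj_in_R)
next
  case (Suc t)
  from Suc.prems(1) have "u \<in> ideal_mult_set (P_power t) P" by simp
  thus ?case
  proof (induction rule: ideal_mult_set_induct)
    case (mult a c)
    note ac = mult
    from Suc.prems(2) have "e \<in> ideal_mult_set (P_power t) P" by simp
    thus ?case
    proof (induction rule: ideal_mult_set_induct)
      case (mult a' c')
      have "a * c * cnj (a' * c') / of_nat N ^ Suc t
          = (a * cnj a' / of_nat N ^ t) * (c * cnj c' / of_nat N)"
        using N_pos by (simp add: field_simps)
      thus ?case using R_mult[OF Suc.IH P_times_cnj_P_div_N] ac mult by simp
    qed (simp_all add: zero_in_R R_add distrib_left add_divide_distrib)
  qed (simp_all add: zero_in_R R_add distrib_right add_divide_distrib)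
qed

lemma cnj_pairing_in_P:
  assumes "u \<in> P_power (Suc t)" "e \<in> P_power t"
  shows "u * cnj e / of_nat N ^ t \<in> P"
proof -
  from assms(1) have "u \<in> ideal_mult_set (P_power t) P" by simp
  thus ?thesis
  proof (induction rule: ideal_mult_set_induct)
    case (mult a c)
    have eq: "a * c * cnj e / of_nat N ^ t = (a * cnj e / of_nat N ^ t) * c"
      by (simp add: divide_inverse ac_simps)
    show ?case unfolding eq
      using P_mult[OF cnj_pairing_in_R[OF mult(1) assms(2)] mult(2)] .
  qed (simp_all add: zero_in_P P_add distrib_right add_divide_distrib)
qed

lemma N_power_in_P_power_cnj: "of_nat N ^ t \<in> ideal_mult_set (P_power t) (cnj ` P_power t)"
proof (induction t)
  case 0
  have "1 * cnj 1 \<in> ideal_mult_set R (cnj ` R)" using one_in_R by (intro mult_in_ideal_mult_set) auto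
  thus ?case by simp
next
  case (Suc t)
  have "of_nat N ^ t * of_nat N \<in> ideal_mult_set (P_power (Suc t)) (cnj ` P_power (Suc t))"
    using Suc.IH N_in_P_cnj_P
    by (rule mult_in_ideal_mult_set_mult)
       (auto simp: mult_in_ideal_mult_set simp flip: complex_cnj_mult)
  thus ?case by (simp add: mult.commute)
qed

lemma P_power_SucI:
  assumes "u \<in> R" "\<And>e. e \<in> P_power t \<Longrightarrow> u * cnj e / of_nat N ^ t \<in> P"
  shows "u \<in> P_power (Suc t)"
proof -
  have "u * of_nat N ^ t / of_nat N ^ t \<in> P_power (Suc t)"
    using N_power_in_P_power_cnj
  proof (induction rule: ideal_mult_set_induct[where Q = "\<lambda>x. u * x / of_nat N ^ t \<in> P_power (Suc t)"])
    case (mult a c)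
    then obtain e where e: "e \<in> P_power t" "c = cnj e" by blast
    have eq: "u * (a * c) / of_nat N ^ t = a * (u * cnj e / of_nat N ^ t)"
      using e by (simp add: divide_inverse ac_simps)
    show ?case unfolding eq ideal_power_set.simps
      using mult e by (intro mult_in_ideal_mult_set assms(2))
  qed (simp_all add: zero_in_ideal_mult_set add_in_ideal_mult_set distrib_left add_divide_distrib)
  thus ?thesis using N_pos by simp
qed

lemma exact_P_power_witness:
  assumes "z \<in> P_power k" "z \<notin> P_power (Suc k)"
  obtains e where "e \<in> P_power k" "z * cnj e / of_nat N ^ k \<in> R" "z * cnj e / of_nat N ^ k \<notin> P"
  using P_power_SucI[of z k] P_power_subset assms cnj_pairing_in_R by blast

lemma exact_P_power_mult:
  assumes "z \<in> P_power k" "z \<notin> P_power (Suc k)" and "x \<in> P_power l" "x \<notin> P_power (Suc l)"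
  shows "z * x \<notin> P_power (Suc (k + l))"
proof
  assume zx: "z * x \<in> P_power (Suc (k + l))"
  obtain e where e: "e \<in> P_power k" "z * cnj e / of_nat N ^ k \<in> R" "z * cnj e / of_nat N ^ k \<notin> P"
    using exact_P_power_witness[OF assms(1,2)] by blast
  obtain e' where e': "e' \<in> P_power l" "x * cnj e' / of_nat N ^ l \<in> R" "x * cnj e' / of_nat N ^ l \<notin> P"
    using exact_P_power_witness[OF assms(3,4)] by blast
  have "z * x * cnj (e * e') / of_nat N ^ (k + l) \<in> P"
    using cnj_pairing_in_P[OF zx P_power_mult_P_power[OF e(1) e'(1)]] .
  moreover have "z * x * cnj (e * e') / of_nat N ^ (k + l)
      = (z * cnj e / of_nat N ^ k) * (x * cnj e' / of_nat N ^ l)"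
    using N_pos by (simp add: field_simps power_add)
  ultimately show False using P_prime e e' by metis
qed

lemma P_power_cancel:
  assumes "z \<in> P_power k" "z \<notin> P_power (Suc k)" "x \<in> R" "z * x \<in> P_power (k + r)"
  shows "x \<in> P_power r"
  using assms(4)
proof (induction r)
  case (Suc r)
  hence "x \<in> P_power r" using P_power_Suc_subset by auto
  thus ?case using exact_P_power_mult[OF assms(1,2)] Suc.prems by fastforce
qed (use assms(3) in simp)

lemma power_notin_P: "x \<in> R \<Longrightarrow> x \<notin> P \<Longrightarrow> x ^ k \<notin> P"
  by (induction k) (use one_notin_P P_prime R_power in auto)

lemma powers_congruent_mod_P:
  assumes "x \<in> R"
  obtains i j where "i < j" "x ^ j - x ^ i \<in> P"
proof -
  have "\<exists>ab. of_int D * x ^ i = of_int (fst ab) + of_int (snd ab) * w" for i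
    using integers_lattice R_power[OF assms, of i] unfolding ring_of_integers_iff by force
  then obtain f where f: "\<And>i. of_int D * x ^ i = of_int (fst (f i)) + of_int (snd (f i)) * w"
    by metis
  define M where "M = D * int N"
  have "M > 0" unfolding M_def using D_pos N_pos by simp
  define g where "g i = (fst (f i) mod M, snd (f i) mod M)" for i
  have "range g \<subseteq> {0..<M} \<times> {0..<M}" unfolding g_def using \<open>M > 0\<close> by auto
  hence "\<not> inj g" using inj_on_finite[of g UNIV] by auto
  then obtain i j where "i \<noteq> j" "g i = g j" unfolding inj_def by blast
  then obtain i j where ij: "i < j" "g i = g j" by (metis linorder_neqE_nat)
  hence "M dvd fst (f j) - fst (f i)" "M dvd snd (f j) - snd (f i)"
    unfolding g_def by (metis mod_eq_dvd_iff prod.inject)+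
  then obtain k1 k2 where k: "fst (f j) - fst (f i) = M * k1" "snd (f j) - snd (f i) = M * k2"
    by (auto elim!: dvdE)
  have "of_int D * (x ^ j - x ^ i)
      = of_int (fst (f j) - fst (f i)) + of_int (snd (f j) - snd (f i)) * w"
    using f[of i] f[of j] by (simp add: algebra_simps)
  also have "\<dots> = of_int D * (of_nat N * (of_int k1 + of_int k2 * w))"
    unfolding k M_def by (simp add: algebra_simps)
  finally have "of_int D * (x ^ j - x ^ i) = of_int D * (of_nat N * (of_int k1 + of_int k2 * w))" .
  hence "x ^ j - x ^ i = of_nat N * (of_int k1 + of_int k2 * w)" using D_pos by simp
  also have "\<dots> \<in> P"
    using P_mult[OF R_add[OF of_int_in_R R_mult[OF of_int_in_R w_in_R]] N_in_P]
    by (simp add: mult.commute)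
  finally show thesis using ij(1) that by blast
qed

lemma residue_inverse:
  assumes "x \<in> R" "x \<notin> P"
  obtains x' where "x' \<in> R" "x * x' - 1 \<in> P"
proof -
  obtain i j where ij: "i < j" "x ^ j - x ^ i \<in> P" using powers_congruent_mod_P[OF assms(1)] .
  have "x ^ j - x ^ i = x ^ i * (x * x ^ (j - i - 1) - 1)"
    using ij(1) by (simp add: algebra_simps flip: power_add power_Suc)
  moreover have "x ^ i \<notin> P" using power_notin_P assms .
  moreover have "x * x ^ (j - i - 1) - 1 \<in> R"
    using assms(1) by (simp add: R_diff R_mult R_power one_in_R)
  ultimately have "x * x ^ (j - i - 1) - 1 \<in> P"
    using P_prime[OF R_power[OF assms(1)]] ij(2) by metis
  thus thesis using that R_power[OF assms(1)] by blast
qed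

lemma nonsquare_form_in_P:
  assumes b: "b \<in> R" "\<not> (\<exists>x\<in>R. b - x ^ 2 \<in> P)"
    and uv: "u \<in> R" "v \<in> R" "u ^ 2 - b * v ^ 2 \<in> P"
  shows "u \<in> P" "v \<in> P"
proof -
  show "v \<in> P"
  proof (rule ccontr)
    assume "v \<notin> P"
    then obtain v' where v': "v' \<in> R" "v * v' - 1 \<in> P" using residue_inverse uv(2) by blast
    \<comment> \<open>\<open>v'\<close> inverts \<open>v\<close> modulo \<open>P\<close>, so \<open>b \<equiv> (u v')\<^sup>2\<close>\<close>
    have "- (v' ^ 2 * (u ^ 2 - b * v ^ 2) + b * (v * v' + 1) * (v * v' - 1)) \<in> P"
      using v' uv b(1)
      by (intro P_uminus P_add P_mult) (simp_all add: R_power R_mult R_add one_in_R)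
    moreover have "- (v' ^ 2 * (u ^ 2 - b * v ^ 2) + b * (v * v' + 1) * (v * v' - 1))
        = b - (u * v') ^ 2"
      by (simp add: algebra_simps power2_eq_square)
    ultimately show False using b(2) R_mult[OF uv(1) v'(1)] by auto
  qed
  hence "(u ^ 2 - b * v ^ 2) + (b * v) * v \<in> P"
    using uv b(1) by (intro P_add P_mult) (simp_all add: R_mult)
  hence "u * u \<in> P" by (simp add: power2_eq_square algebra_simps)
  thus "u \<in> P" using P_prime[OF uv(1) uv(1)] by blast
qed

lemma nonsquare_form_in_P_power:
  assumes b: "b \<in> R" "\<not> (\<exists>x\<in>R. b - x ^ 2 \<in> P)"
    and "u \<in> P_power j" "v \<in> P_power j" "u ^ 2 - b * v ^ 2 \<in> P_power (Suc (j + j))"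
  shows "u \<in> P_power (Suc j)" "v \<in> P_power (Suc j)"
proof -
  have "u * cnj e / of_nat N ^ j \<in> P \<and> v * cnj e / of_nat N ^ j \<in> P" if e: "e \<in> P_power j" for e
  proof -
    have "(u ^ 2 - b * v ^ 2) * cnj (e * e) / of_nat N ^ (j + j) \<in> P"
      using cnj_pairing_in_P assms(5) P_power_mult_P_power[OF e e] by blast
    moreover have "(u ^ 2 - b * v ^ 2) * cnj (e * e) / of_nat N ^ (j + j) =
        (u * cnj e / of_nat N ^ j) ^ 2 - b * (v * cnj e / of_nat N ^ j) ^ 2"
      using N_pos by (simp add: field_simps power_add power2_eq_square)
    ultimately have "(u * cnj e / of_nat N ^ j) ^ 2 - b * (v * cnj e / of_nat N ^ j) ^ 2 \<in> P"
      by simp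
    thus ?thesis
      using nonsquare_form_in_P[OF b cnj_pairing_in_R cnj_pairing_in_R] e assms(3,4) by blast
  qed
  thus "u \<in> P_power (Suc j)" "v \<in> P_power (Suc j)"
    using P_power_SucI P_power_subset assms(3,4) by blast+
qed

text \<open>Krull's intersection theorem: the integer \<open>|z|\<^sup>2\<close> is divisible by every \<open>N\<^sup>j\<close>.\<close>
lemma Inter_P_power_eq_zero:
  assumes "z \<in> R" "\<And>j. z \<in> P_power j"
  shows "z = 0"
proof (rule ccontr)
  assume "z \<noteq> 0"
  then obtain K where K: "K > 0" "z * cnj z = of_int K" using norm_pos_int assms(1) by metis
  have "int N ^ j \<le> K" for j
  proof -
    have "algebraic_int (of_int K / of_int (int N ^ j) :: complex)"
      using cnj_pairing_in_R[OF assms(2) assms(2)] K(2) by (simp add: ring_of_integers_def)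
    hence "(of_int K / of_int (int N ^ j) :: complex) \<in> \<int>"
      by (rule rational_algebraic_int_is_int) simp
    then obtain L where "(of_int K / of_int (int N ^ j) :: complex) = of_int L"
      by (auto elim: Ints_cases)
    hence "(of_int K :: complex) = of_int (L * int N ^ j)" using N_pos by (simp add: field_simps)
    hence "K = L * int N ^ j" by (simp only: of_int_eq_iff)
    thus ?thesis using K(1) by (simp add: zdvd_imp_le)
  qed
  moreover have "(2::int) ^ nat K \<le> int N ^ nat K" using N_ge_2 by (simp add: power_mono)
  ultimately have "2 ^ nat K \<le> K" by (meson order_trans)
  moreover have "int (nat K) < 2 ^ nat K" by (metis less_exp of_nat_less_iff of_nat_numeral of_nat_power)
  ultimately show False using K(1) by simp
qed

section \<open>Non-vanishing determinants\<close>

lemma nonsquare_form_in_P_power_double: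
  assumes "b \<in> R" "u \<in> P_power j" "v \<in> P_power j"
  shows "u ^ 2 - b * v ^ 2 \<in> P_power (j + j)"
  using assms by (simp add: power2_eq_square P_power_diff P_power_mult P_power_mult_P_power
      flip: mult.assoc)

lemma nonsquare_forms_eq_imp_zero:
  assumes b: "b \<in> R" "\<not> (\<exists>x\<in>R. b - x ^ 2 \<in> P)"
    and x: "x \<in> P_power (Suc m)" "x \<notin> P_power (Suc (Suc m))"
    and y: "y \<in> P_power m" "y \<notin> P_power (Suc m)"
    and R: "\<alpha> \<in> R" "\<beta> \<in> R" "\<gamma> \<in> R" "\<delta> \<in> R"
    and eq: "y * (\<alpha> ^ 2 - b * \<gamma> ^ 2) = x * (\<beta> ^ 2 - b * \<delta> ^ 2)"
  shows "\<alpha> = 0 \<and> \<beta> = 0 \<and> \<gamma> = 0 \<and> \<delta> = 0"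
proof -
  have forms_R: "\<alpha> ^ 2 - b * \<gamma> ^ 2 \<in> R" "\<beta> ^ 2 - b * \<delta> ^ 2 \<in> R"
    using R b(1) by (simp_all add: R_diff R_mult R_power)
  have "\<alpha> \<in> P_power j \<and> \<beta> \<in> P_power j \<and> \<gamma> \<in> P_power j \<and> \<delta> \<in> P_power j" for j
  proof (induction j)
    case 0 thus ?case using R by simp
  next
    case (Suc j)
    have "x * (\<beta> ^ 2 - b * \<delta> ^ 2) \<in> P_power (Suc m + (j + j))"
      using Suc nonsquare_form_in_P_power_double b(1) P_power_mult_P_power x(1) by blast
    hence "y * (\<alpha> ^ 2 - b * \<gamma> ^ 2) \<in> P_power (m + Suc (j + j))" using eq by simp
    hence "\<alpha> ^ 2 - b * \<gamma> ^ 2 \<in> P_power (Suc (j + j))" using P_power_cancel y forms_R(1) by blast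
    hence \<alpha>\<gamma>: "\<alpha> \<in> P_power (Suc j)" "\<gamma> \<in> P_power (Suc j)"
      using nonsquare_form_in_P_power[OF b] Suc by blast+
    have "y * (\<alpha> ^ 2 - b * \<gamma> ^ 2) \<in> P_power (m + (Suc j + Suc j))"
      using \<alpha>\<gamma> nonsquare_form_in_P_power_double b(1) P_power_mult_P_power y(1) by blast
    hence "x * (\<beta> ^ 2 - b * \<delta> ^ 2) \<in> P_power (Suc m + Suc (j + j))" using eq by simp
    hence "\<beta> ^ 2 - b * \<delta> ^ 2 \<in> P_power (Suc (j + j))" using P_power_cancel x forms_R(2) by blast
    hence "\<beta> \<in> P_power (Suc j)" "\<delta> \<in> P_power (Suc j)"
      using nonsquare_form_in_P_power[OF b] Suc by blast+
    thus ?case using \<alpha>\<gamma> by blast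
  qed
  thus ?thesis using Inter_P_power_eq_zero R by metis
qed

lemma codebook_det_lower_bound:
  assumes b: "b \<in> R" "\<not> (\<exists>x\<in>R. b - x ^ 2 \<in> P)"
    and x: "x \<in> P_power (Suc m)" "x \<notin> P_power (Suc (Suc m))"
    and y: "y \<in> P_power m" "y \<notin> P_power (Suc m)"
    and s: "y * s ^ 2 = x" and X: "X \<in> codebook R s b" "X \<noteq> 0"
  shows "1 / (cmod y)\<^sup>2 \<le> (cmod (det X))\<^sup>2"
proof -
  obtain \<alpha> \<beta> \<gamma> \<delta> where X_eq: "X = vector [vector [\<alpha> + \<beta> * s, \<gamma> + \<delta> * s],
      vector [b * (\<gamma> - \<delta> * s), \<alpha> - \<beta> * s]]"
    and R: "\<alpha> \<in> R" "\<beta> \<in> R" "\<gamma> \<in> R" "\<delta> \<in> R"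
    using X(1) unfolding codebook_def by blast
  have "x \<in> R" "y \<in> R" using x(1) y(1) P_power_subset by blast+
  have "y \<noteq> 0" using y(2) zero_in_P_power by blast
  define z where "z = y * (\<alpha> ^ 2 - b * \<gamma> ^ 2) - x * (\<beta> ^ 2 - b * \<delta> ^ 2)"
  have "y * det X = z"
    unfolding X_eq z_def det_2 s[symmetric] by (simp add: algebra_simps power2_eq_square)
  have "z \<in> R"
    unfolding z_def using R b(1) \<open>x \<in> R\<close> \<open>y \<in> R\<close> by (simp add: R_diff R_mult R_power)
  moreover have "z \<noteq> 0"
  proof
    assume "z = 0"
    hence "\<alpha> = 0 \<and> \<beta> = 0 \<and> \<gamma> = 0 \<and> \<delta> = 0"
      using nonsquare_forms_eq_imp_zero[OF b x y R] unfolding z_def by simp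
    thus False using X X_eq by (simp add: vec_eq_iff forall_2)
  qed
  ultimately have "(cmod z)\<^sup>2 \<ge> 1" by (rule norm_ge_1)
  moreover have "(cmod (det X))\<^sup>2 = (cmod z)\<^sup>2 / (cmod y)\<^sup>2"
    using \<open>y * det X = z\<close> \<open>y \<noteq> 0\<close> by (auto simp: norm_mult power_mult_distrib field_simps)
  ultimately show ?thesis by (simp add: divide_right_mono)
qed

lemma codebook_nvd:
  assumes b: "b \<in> R" "\<not> (\<exists>x\<in>R. b - x ^ 2 \<in> P)"
    and \<pi>: "pval_eq R P \<pi> 1" and s: "s ^ 2 = \<pi>"
  shows "(INF X \<in> codebook R s b - {0}. (cmod (det X))\<^sup>2) > 0"
proof -
  obtain x y m m' where xy: "y \<noteq> 0" "\<pi> = x / y"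
      "ord_eq R P x m" "ord_eq R P y m'" "int m - int m' = 1"
    using \<pi> unfolding pval_eq_def by blast
  have "m = Suc m'" using xy(5) by simp
  hence x: "x \<in> P_power (Suc m')" "x \<notin> P_power (Suc (Suc m'))"
    and y: "y \<in> P_power m'" "y \<notin> P_power (Suc m')"
    using xy(3,4) unfolding ord_eq_def by simp_all
  have "y * s ^ 2 = x" using s xy(1,2) by simp
  define I :: "complex^2^2"
    where "I = vector [vector [1 + 0 * s, 0 + 0 * s], vector [b * (0 - 0 * s), 1 - 0 * s]]"
  have "I \<in> codebook R s b" unfolding codebook_def I_def using zero_in_R one_in_R by blast
  moreover have "I \<noteq> 0" by (simp add: I_def vec_eq_iff forall_2)
  ultimately have "1 / (cmod y)\<^sup>2 \<le> (INF X \<in> codebook R s b - {0}. (cmod (det X))\<^sup>2)"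
    using codebook_det_lower_bound[OF b x y \<open>y * s ^ 2 = x\<close>] by (intro cINF_greatest) auto
  moreover have "1 / (cmod y)\<^sup>2 > 0" using xy(1) by simp
  ultimately show ?thesis by linarith
qed

end

section \<open>The rational and imaginary quadratic fields\<close>

lemma complex_of_rat_eq: "(of_rat r :: complex) = complex_of_real (of_rat r)"
  by (cases r) (simp add: of_rat_rat)

lemma cnj_of_rat [simp]: "cnj (of_rat r) = of_rat r"
  by (simp add: complex_of_rat_eq)

lemma cnj_Rats: "x \<in> \<rat> \<Longrightarrow> cnj x = (x :: complex)"
  by (auto elim!: Rats_cases)

lemma cnj_field_Rats: "cnj_field \<rat> 1 0"
proof
  show "x + cnj x \<in> \<int> \<Longrightarrow> x * cnj x \<in> \<int> \<Longrightarrow> \<exists>a b. of_int 1 * x = of_int a + of_int b * 0"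
    if "x \<in> \<rat>" for x :: complex
    using Ints_if_Rats_square_Ints[OF that] that by (auto simp: cnj_Rats power2_eq_square elim: Ints_cases)
qed (auto simp: cnj_Rats)

context
  fixes d :: nat and \<omega> :: complex
  assumes \<omega>_sq: "\<omega> * \<omega> = - of_nat d" and cnj_\<omega>: "cnj \<omega> = - \<omega>"
begin

lemma cnj_rat_omega: "cnj (of_rat p + of_rat q * \<omega>) = of_rat p + of_rat (- q) * \<omega>"
  by (simp add: cnj_\<omega> of_rat_minus)

lemma trace_rat_omega: "(of_rat p + of_rat q * \<omega>) + cnj (of_rat p + of_rat q * \<omega>) = of_rat (2 * p)"
  unfolding cnj_rat_omega by (simp add: of_rat_mult of_rat_minus)

lemma norm_rat_omega:
  "(of_rat p + of_rat q * \<omega>) * cnj (of_rat p + of_rat q * \<omega>) = of_rat (p * p + of_nat d * q * q)"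
  unfolding cnj_rat_omega of_rat_add of_rat_mult of_rat_minus of_rat_of_nat_eq using \<omega>_sq by algebra

lemma integral_rat_omega_lattice:
  assumes x: "x = of_rat p + of_rat q * \<omega>" and tr: "x + cnj x \<in> \<int>" and nm: "x * cnj x \<in> \<int>"
  shows "\<exists>a b. of_int (2 * int d) * x = of_int a + of_int b * \<omega>"
proof -
  have t: "(of_rat (2 * p) :: complex) \<in> \<int>" using tr unfolding x trace_rat_omega .
  \<comment> \<open>\<open>(2 d q)\<^sup>2 = d (4 |x|\<^sup>2 - (2 p)\<^sup>2)\<close> is an integer, hence so is \<open>2 d q\<close>\<close>
  have "(of_rat (2 * of_nat d * q) :: complex) ^ 2 = of_nat d * (4 * (x * cnj x) - (of_rat (2 * p)) ^ 2)"
    unfolding x norm_rat_omega of_rat_mult of_rat_add of_rat_of_nat_eq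
    by (simp add: algebra_simps power2_eq_square)
  also have "\<dots> \<in> \<int>"
    by (rule Ints_mult[OF Ints_of_nat Ints_diff[OF Ints_mult[OF _ nm] Ints_power[OF t]]]) simp
  finally have "(of_rat (2 * of_nat d * q) :: complex) \<in> \<int>"
    by (rule Ints_if_Rats_square_Ints[rotated]) simp
  then obtain b where b: "(of_rat (2 * of_nat d * q) :: complex) = of_int b" by (auto elim: Ints_cases)
  obtain a where a: "(of_rat (2 * p) :: complex) = of_int a" using t by (auto elim: Ints_cases)
  have "of_int (2 * int d) * x = of_nat d * of_rat (2 * p) + of_rat (2 * of_nat d * q) * \<omega>"
    unfolding x by (simp add: of_rat_mult algebra_simps)
  also have "\<dots> = of_int (int d * a) + of_int b * \<omega>" unfolding a b by simp
  finally show ?thesis by blast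
qed

end

lemma cnj_field_imag_quadratic:
  fixes d :: nat
  assumes d: "d > 0"
  defines "\<omega> \<equiv> \<i> * complex_of_real (sqrt (real d))"
  shows "cnj_field {of_rat p + of_rat q * \<omega> | p q. True} (2 * int d) \<omega>"
proof -
  define F where "F = {of_rat p + of_rat q * \<omega> | p q. True}"
  have mem_F: "x \<in> F \<longleftrightarrow> (\<exists>p q. x = of_rat p + of_rat q * \<omega>)" for x
    by (simp add: F_def)
  have "complex_of_real (sqrt (real d)) * complex_of_real (sqrt (real d)) = of_nat d"
    by (simp only: of_real_mult[symmetric] real_sqrt_mult_self) simp
  hence \<omega>_sq: "\<omega> * \<omega> = - of_nat d"
    unfolding \<omega>_def by (simp add: algebra_simps)
  have cnj_\<omega>: "cnj \<omega> = - \<omega>" by (simp add: \<omega>_def)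
  note \<omega> = \<omega>_sq cnj_\<omega>
  have "cnj_field F (2 * int d) \<omega>"
  proof
    fix x y assume "x \<in> F" "y \<in> F"
    then obtain p1 q1 p2 q2 where x: "x = of_rat p1 + of_rat q1 * \<omega>" and y: "y = of_rat p2 + of_rat q2 * \<omega>"
      by (auto simp: mem_F)
    have "x + y = of_rat (p1 + p2) + of_rat (q1 + q2) * \<omega>" unfolding x y by (simp add: of_rat_add algebra_simps)
    thus "x + y \<in> F" by (auto simp: mem_F)
    have "x * y = of_rat (p1 * p2 - of_nat d * q1 * q2) + of_rat (p1 * q2 + q1 * p2) * \<omega>"
      unfolding x y of_rat_add of_rat_mult of_rat_diff of_rat_of_nat_eq using \<omega>_sq by algebra
    thus "x * y \<in> F" by (auto simp: mem_F)
  next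
    fix x assume "x \<in> F"
    then obtain p q where x: "x = of_rat p + of_rat q * \<omega>" by (auto simp: mem_F)
    have "- x = of_rat (- p) + of_rat (- q) * \<omega>" unfolding x by (simp add: of_rat_minus)
    thus "- x \<in> F" by (auto simp: mem_F)
    show "cnj x \<in> F" unfolding x cnj_rat_omega[OF \<omega>] by (auto simp: mem_F)
    show "x + cnj x \<in> \<rat>" "x * cnj x \<in> \<rat>"
      unfolding x trace_rat_omega[OF \<omega>] norm_rat_omega[OF \<omega>] by simp_all
    show "x \<in> \<rat>" if "Im x = 0"
    proof -
      have "of_rat q * sqrt (real d) = 0"
        using that unfolding x \<omega>_def by (simp add: complex_of_rat_eq)
      hence "q = 0" using d by simp
      thus ?thesis unfolding x by simp
    qed
    show "x + cnj x \<in> \<int> \<Longrightarrow> x * cnj x \<in> \<int> \<Longrightarrow> \<exists>a b. of_int (2 * int d) * x = of_int a + of_int b * \<omega>"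
      by (rule integral_rat_omega_lattice[OF \<omega> x])
  next
    show "r \<in> F" if "r \<in> \<rat>" for r
      using that mem_F[of r] by (metis Rats_cases add.right_neutral mult_zero_left of_rat_0)
    show "0 < 2 * int d" using d by simp
    show "\<omega> \<in> F" using mem_F[of \<omega>] by (metis add_0 mult_1 of_rat_0 of_rat_1)
    show "\<omega> + cnj \<omega> \<in> \<int>" "\<omega> * cnj \<omega> \<in> \<int>" using \<omega>_sq by (simp_all add: cnj_\<omega>)
  qed
  thus ?thesis unfolding F_def .
qed

theorem theorem7p3:
  fixes F :: "complex set" and P :: "complex set" and \<pi> b s :: complex
  assumes hF: "F = \<rat> \<or>
      (\<exists>d::nat. d > 0 \<and> squarefree d \<and>
         F = {of_rat p + of_rat q * \<i> * complex_of_real (sqrt (real d)) | p q. True})"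
    and hP: "is_nonzero_prime_ideal (ring_of_integers F) P"
    and hpi: "\<pi> \<in> F" "pval_eq (ring_of_integers F) P \<pi> 1"
    and hb: "b \<in> ring_of_integers F"
      "\<not> (\<exists>x \<in> ring_of_integers F. b - x ^ 2 \<in> P)"
    and hs: "s ^ 2 = \<pi>"
  shows "(INF X \<in> codebook (ring_of_integers F) s b - {0}. (cmod (det X))\<^sup>2) > 0"
proof -
  obtain D w where "cnj_field F D w"
  proof (cases "F = \<rat>")
    case True
    thus thesis using cnj_field_Rats that by blast
  next
    case False
    then obtain d :: nat where "d > 0"
      and "F = {of_rat p + of_rat q * \<i> * complex_of_real (sqrt (real d)) | p q. True}"
      using hF by blast
    thus thesis using cnj_field_imag_quadratic[of d] that by (simp add: mult.assoc)
  qed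
  then interpret cnj_field_prime F D w P by (intro cnj_field_prime.intro cnj_field_prime_axioms.intro hP)
  show ?thesis using codebook_nvd[OF hb hpi(2) hs] .
qed

end
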